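(* Let $K_x,K_y,K_z>0$. Then $\min_{\vec q\in[-\pi,\pi]^2}\epsilon_{\vec q,1}=0$ if and only if $|K_x-K_y|\le K_z\le K_x+K_y$ (i.e. $K_x,K_y,K_z$ satisfy all three triangle inequalities). When these inequalities hold, $\epsilon_{\vec q,1}$ vanishes at $\vec q=(0,\pm q_y^* )$ with $\cos q_y^*=\dfrac{\cosh2K_z-\cosh2K_x\cosh2K_y}{\sinh2K_x\sinh2K_y}$; otherwise $\epsilon_{\vec q,1}>0$ for all $\vec q$.
   Context: For $\vec q=(q_x,q_y)$, with $P=\begin{pmatrix}0&i&0&0\\-i&0&0&0\\0&0&0&i\\0&0&-i&0\end{pmatrix}$, $Q=\begin{pmatrix}0&ie^{-iq_y}&0&0\\-ie^{iq_y}&0&0&0\\0&0&0&ie^{iq_y}\\0&0&-ie^{-iq_y}&0\end{pmatrix}$, $R=\begin{pmatrix}0&0&0&ie^{-iq_x}\\0&0&-i&0\\0&i&0&0\\-ie^{iq_x}&0&0&0\end{pmatrix}$, let $T_{\vec q}=e^{2K_xP}e^{2K_yQ}e^{2K_zR}$. Its eigenvalues are $e^{\pm\epsilon_{\vec q,1}},e^{\pm\epsilon_{\vec q,2}}$ with $0\le\epsilon_{\vec q,1}\le\epsilon_{\vec q,2}$ real. Equivalently $z_j=\cosh\epsilon_{\vec q,j}$ are the roots of $z^2+Az+B=0$ with $A=-2c_3(c_1c_2+s_1s_2\cos q_y)$, $B=\tfrac18S_1S_2(3+C_3-2s_3^2\cos q_x)\cos q_y+\tfrac12s_1^2s_2^2\cos2q_y+\tfrac14s_3^2(1-C_1C_2)\cos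 q_x+\tfrac18(C_1+C_2+3C_3)+\tfrac14C_1C_2+\tfrac18C_1C_2C_3$, where $c_j=\cosh2K_j$, $s_j=\sinh2K_j$, $C_j=\cosh4K_j$, $S_j=\sinh4K_j$ and indices $1,2,3$ stand for $x,y,z$.
   Formalization: $\epsilon_{\vec q,1}$ is the smaller of |ln|z + sqrt(z*z - 1)|| over the two complex roots z of $z^2+Az+B=0$, in place of the real number with $z_j=\cosh\epsilon_{\vec q,j}$. The paper assumes this as well. *)

theory Defs
  imports "HOL-Analysis.Analysis"
begin

text \<open>Coefficients of the quadratic z^2 + A z + B = 0 whose roots are z_j = cosh eps_{q,j}.
  Indices 1,2,3 stand for x,y,z: c_j = cosh 2K_j, s_j = sinh 2K_j, C_j = cosh 4K_j, S_j = sinh 4K_j.\<close>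

definition coefA :: "real \<Rightarrow> real \<Rightarrow> real \<Rightarrow> real \<Rightarrow> real" where
  "coefA Kx Ky Kz qy =
     - 2 * cosh (2*Kz) * (cosh (2*Kx) * cosh (2*Ky) + sinh (2*Kx) * sinh (2*Ky) * cos qy)"

definition coefB :: "real \<Rightarrow> real \<Rightarrow> real \<Rightarrow> real \<Rightarrow> real \<Rightarrow> real" where
  "coefB Kx Ky Kz qx qy =
     1/8 * sinh (4*Kx) * sinh (4*Ky) * (3 + cosh (4*Kz) - 2 * (sinh (2*Kz))^2 * cos qx) * cos qy
   + 1/2 * (sinh (2*Kx))^2 * (sinh (2*Ky))^2 * cos (2*qy)
   + 1/4 * (sinh (2*Kz))^2 * (1 - cosh (4*Kx) * cosh (4*Ky)) * cos qx
   + 1/8 * (cosh (4*Kx) + cosh (4*Ky) + 3 * cosh (4*Kz))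
   + 1/4 * cosh (4*Kx) * cosh (4*Ky)
   + 1/8 * cosh (4*Kx) * cosh (4*Ky) * cosh (4*Kz)"

definition zroot :: "bool \<Rightarrow> real \<Rightarrow> real \<Rightarrow> real \<Rightarrow> real \<Rightarrow> real \<Rightarrow> complex" where
  "zroot pl Kx Ky Kz qx qy =
     (let A = complex_of_real (coefA Kx Ky Kz qy);
          B = complex_of_real (coefB Kx Ky Kz qx qy)
      in (- A + (if pl then 1 else -1) * csqrt (A^2 - 4 * B)) / 2)"

text \<open>For a root z = cosh eps, the corresponding eigenvalues of T_q are
  lambda = z +- sqrt(z^2-1) = e^{+-eps}; eps := |ln |lambda|| (the same for lambda and 1/lambda).
  For real z \<ge> 1 this is exactly arcosh z.\<close>

definition eps_of :: "complex \<Rightarrow> real" where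
  "eps_of z = \<bar>ln (cmod (z + csqrt (z^2 - 1)))\<bar>"

definition eps1 :: "real \<Rightarrow> real \<Rightarrow> real \<Rightarrow> real \<Rightarrow> real \<Rightarrow> real" where
  "eps1 Kx Ky Kz qx qy =
     min (eps_of (zroot True Kx Ky Kz qx qy)) (eps_of (zroot False Kx Ky Kz qx qy))"

end

theory Submission
  imports Defs
begin

text \<open>Put X(q_y) = cosh 2K_x cosh 2K_y + sinh 2K_x sinh 2K_y cos q_y. The polynomial
  p(z) = z^2 + A z + B equals
  (X - cosh 2K_z)^2 + (1 - z)(2 cosh 2K_z X - 1 - z)
    + sinh^2 2K_z (1 - cos q_x)/2 (X^2 - 1 + sinh^2 2K_x sinh^2 2K_y sin^2 q_y),
  a sum of nonnegative terms for real z \<le> 1. An exponent eps vanishes exactly when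
  z = cosh eps is a real root in [-1, 1], which therefore forces X(q_y) = cosh 2K_z; conversely,
  if X(q_y) = cosh 2K_z then z = 1 is a root at q_x = 0. Since X ranges over
  [cosh (2K_x - 2K_y), cosh (2K_x + 2K_y)], the value cosh 2K_z is attained iff
  K_x, K_y, K_z satisfy the triangle inequalities.\<close>

text \<open>The hyperbolic law of cosines: cosh of the third side of a hyperbolic triangle with
  sides a, b enclosing the angle pi - q.\<close>

definition cosh_law :: "real \<Rightarrow> real \<Rightarrow> real \<Rightarrow> real" where
  "cosh_law a b q = cosh a * cosh b + sinh a * sinh b * cos q"

lemma cosh_law_bounds:
  assumes "a \<ge> 0" "b \<ge> 0"
  shows "cosh (a - b) \<le> cosh_law a b q" "cosh_law a b q \<le> cosh (a + b)"
proof -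
  have "sinh a * sinh b \<ge> 0" using assms by simp
  then have "- (sinh a * sinh b) \<le> sinh a * sinh b * cos q" "sinh a * sinh b * cos q \<le> sinh a * sinh b"
    using mult_left_mono[of "cos q" 1 "sinh a * sinh b"] mult_left_mono[of "-1" "cos q" "sinh a * sinh b"]
    by auto
  then show "cosh (a - b) \<le> cosh_law a b q" "cosh_law a b q \<le> cosh (a + b)"
    unfolding cosh_law_def cosh_diff cosh_add by auto
qed

lemma cosh_law_eq_iff_cos:
  assumes "sinh a * sinh b \<noteq> 0"
  shows "cosh_law a b q = y \<longleftrightarrow> cos q = (y - cosh a * cosh b) / (sinh a * sinh b)"
  using assms unfolding cosh_law_def by (auto simp: field_simps)

lemma triangle_iff_cosh_between:
  fixes a b c :: real
  assumes "a \<ge> 0" "b \<ge> 0" "c \<ge> 0"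
  shows "(\<bar>a - b\<bar> \<le> c \<and> c \<le> a + b) \<longleftrightarrow> cosh (a - b) \<le> cosh c \<and> cosh c \<le> cosh (a + b)"
  using assms cosh_real_nonneg_le_iff[of "\<bar>a - b\<bar>" c] cosh_real_nonneg_le_iff[of c "a + b"]
  by (simp add: cosh_real_abs)

lemma cosh_law_eq_cosh_imp_triangle:
  assumes "a \<ge> 0" "b \<ge> 0" "c \<ge> 0" "cosh_law a b q = cosh c"
  shows "\<bar>a - b\<bar> \<le> c \<and> c \<le> a + b"
  using assms cosh_law_bounds[of a b q] triangle_iff_cosh_between by simp

lemma triangle_imp_cosh_law_solvable:
  assumes "a > 0" "b > 0" "c \<ge> 0" "\<bar>a - b\<bar> \<le> c" "c \<le> a + b"
  shows "\<exists>q\<in>{0..pi}. cos q = (cosh c - cosh a * cosh b) / (sinh a * sinh b)"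
proof -
  define v where "v = (cosh c - cosh a * cosh b) / (sinh a * sinh b)"
  have s: "sinh a * sinh b > 0" using assms by simp
  have "cosh (a - b) \<le> cosh c" "cosh c \<le> cosh (a + b)"
    using assms triangle_iff_cosh_between[of a b c] by auto
  then have "-1 \<le> v" "v \<le> 1"
    using s unfolding v_def cosh_diff cosh_add by (simp_all add: field_simps)
  then have "arccos v \<in> {0..pi}" "cos (arccos v) = v"
    by (simp_all add: arccos_lbound arccos_ubound)
  then show ?thesis unfolding v_def by blast
qed

lemma char_poly_sum_form:
  fixes z :: real
  shows "z^2 + coefA Kx Ky Kz qy * z + coefB Kx Ky Kz qx qy
   = (cosh_law (2*Kx) (2*Ky) qy - cosh (2*Kz))^2
     + (1 - z) * (2 * cosh (2*Kz) * cosh_law (2*Kx) (2*Ky) qy - 1 - z)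
     + sinh (2*Kz)^2 * ((1 - cos qx) / 2)
       * (cosh_law (2*Kx) (2*Ky) qy^2 - 1 + (sinh (2*Kx) * sinh (2*Ky) * sin qy)^2)"
proof -
  have sq: "cosh (2*K)^2 = 1 + sinh (2*K)^2" for K :: real by (simp add: cosh_square_eq)
  have cosh4: "cosh (4*K) = 1 + 2 * sinh (2*K)^2" for K :: real
    using cosh_double[of "2*K"] by (simp add: cosh_square_eq)
  have sinh4: "sinh (4*K) = 2 * sinh (2*K) * cosh (2*K)" for K :: real
    using sinh_double[of "2*K"] by simp
  show ?thesis
    using sq[of Kx] sq[of Ky] sq[of Kz] sin_squared_eq[of qy]
    unfolding cosh_law_def coefA_def coefB_def cosh4 sinh4 cos_double_cos
    by algebra
qed

lemma char_poly_ge: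
  fixes z :: real
  assumes "Kx \<ge> 0" "Ky \<ge> 0" "z \<le> 1"
  shows "z^2 + coefA Kx Ky Kz qy * z + coefB Kx Ky Kz qx qy \<ge> (cosh_law (2*Kx) (2*Ky) qy - cosh (2*Kz))^2"
proof -
  define X where "X = cosh_law (2*Kx) (2*Ky) qy"
  have X: "X \<ge> 1"
    using cosh_law_bounds(1)[of "2*Kx" "2*Ky" qy] cosh_real_ge_1[of "2*Kx - 2*Ky"] assms
    unfolding X_def by linarith
  then have "cosh (2*Kz) * X \<ge> 1"
    using cosh_real_ge_1[of "2*Kz"] mult_mono[of 1 "cosh (2*Kz)" 1 X] by simp
  then have "(1 - z) * (2 * cosh (2*Kz) * X - 1 - z) \<ge> 0"
    using assms(3) by simp
  moreover have "X^2 - 1 \<ge> 0" using one_le_power[OF X, of 2] by simp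
  then have "sinh (2*Kz)^2 * ((1 - cos qx) / 2) * (X^2 - 1 + (sinh (2*Kx) * sinh (2*Ky) * sin qy)^2) \<ge> 0"
    by simp
  ultimately show ?thesis
    unfolding char_poly_sum_form X_def[symmetric] by linarith
qed

lemma char_poly_at_1:
  "1 + coefA Kx Ky Kz qy + coefB Kx Ky Kz 0 qy = (cosh_law (2*Kx) (2*Ky) qy - cosh (2*Kz))^2"
  using char_poly_sum_form[of 1 Kx Ky Kz qy 0] by simp

lemma zroot_factorization:
  fixes z :: complex
  shows "z^2 + of_real (coefA Kx Ky Kz qy) * z + of_real (coefB Kx Ky Kz qx qy)
    = (z - zroot True Kx Ky Kz qx qy) * (z - zroot False Kx Ky Kz qx qy)"
proof -
  define A where "A = complex_of_real (coefA Kx Ky Kz qy)"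
  define B where "B = complex_of_real (coefB Kx Ky Kz qx qy)"
  define d where "d = csqrt (A^2 - 4 * B)"
  have roots: "zroot True Kx Ky Kz qx qy = (- A + d) / 2" "zroot False Kx Ky Kz qx qy = (- A - d) / 2"
    unfolding zroot_def A_def B_def d_def Let_def by simp_all
  have "d^2 = A^2 - 4 * B" unfolding d_def by simp
  then have "z^2 + A * z + B = (z - (- A + d) / 2) * (z - (- A - d) / 2)"
    by (simp add: field_simps power2_eq_square)
  then show ?thesis unfolding roots A_def B_def .
qed

text \<open>The two numbers z +- sqrt (z^2 - 1) have product 1, so if one has modulus 1 they are
  complex conjugates and z is their real mean.\<close>

lemma eps_of_eq_0_imp_real:
  assumes "eps_of z = 0"
  shows "\<exists>t. z = complex_of_real t \<and> \<bar>t\<bar> \<le> 1"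
proof -
  define s where "s = csqrt (z^2 - 1)"
  have prod: "(z + s) * (z - s) = 1"
    using power2_csqrt[of "z^2 - 1"] unfolding s_def by (simp add: algebra_simps power2_eq_square)
  moreover have "ln (cmod (z + s)) = 0"
    using assms unfolding eps_of_def s_def by simp
  ultimately have norm: "cmod (z + s) = 1"
    by (metis ln_eq_zero_iff mult_zero_left zero_less_norm_iff zero_neq_one)
  have "(z + s) * cnj (z + s) = 1"
    using complex_norm_square[of "z + s"] norm by simp
  then have "z - s = cnj (z + s)"
    using prod by (metis mult_cancel_left mult_zero_left zero_neq_one)
  then have "z = complex_of_real (Re (z + s))"
    using complex_add_cnj[of "z + s"] by (simp add: complex_eq_iff)
  moreover have "\<bar>Re (z + s)\<bar> \<le> 1" using abs_Re_le_cmod[of "z + s"] norm by simp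
  ultimately show ?thesis by blast
qed

lemma eps_of_zroot_pos:
  assumes "Kx \<ge> 0" "Ky \<ge> 0" "cosh_law (2*Kx) (2*Ky) qy \<noteq> cosh (2*Kz)"
  shows "eps_of (zroot pl Kx Ky Kz qx qy) > 0"
proof (rule ccontr)
  assume "\<not> eps_of (zroot pl Kx Ky Kz qx qy) > 0"
  then have "eps_of (zroot pl Kx Ky Kz qx qy) = 0" unfolding eps_of_def by simp
  then obtain t where t: "zroot pl Kx Ky Kz qx qy = complex_of_real t" "\<bar>t\<bar> \<le> 1"
    using eps_of_eq_0_imp_real by blast
  have "complex_of_real (t^2 + coefA Kx Ky Kz qy * t + coefB Kx Ky Kz qx qy) = 0"
    using zroot_factorization[of "zroot pl Kx Ky Kz qx qy"] t(1) by (cases pl) simp_all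
  then have "t^2 + coefA Kx Ky Kz qy * t + coefB Kx Ky Kz qx qy = 0" by (simp only: of_real_eq_0_iff)
  moreover have "(cosh_law (2*Kx) (2*Ky) qy - cosh (2*Kz))^2 > 0" using assms(3) by simp
  ultimately show False using char_poly_ge[of Kx Ky t qy Kz qx] assms t(2) by linarith
qed

lemma eps1_nonneg: "eps1 Kx Ky Kz qx qy \<ge> 0"
  unfolding eps1_def eps_of_def by simp

lemma eps1_pos:
  assumes "Kx \<ge> 0" "Ky \<ge> 0" "cosh_law (2*Kx) (2*Ky) qy \<noteq> cosh (2*Kz)"
  shows "eps1 Kx Ky Kz qx qy > 0"
  using eps_of_zroot_pos[OF assms] unfolding eps1_def by simp

lemma eps1_eq_0:
  assumes "cosh_law (2*Kx) (2*Ky) qy = cosh (2*Kz)"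
  shows "eps1 Kx Ky Kz 0 qy = 0"
proof -
  have "complex_of_real (1 + coefA Kx Ky Kz qy + coefB Kx Ky Kz 0 qy) = 0"
    using char_poly_at_1[of Kx Ky Kz qy] assms by simp
  then have "(1 - zroot True Kx Ky Kz 0 qy) * (1 - zroot False Kx Ky Kz 0 qy) = 0"
    using zroot_factorization[of 1 Kx Ky Kz qy 0] by simp
  then have "eps_of (zroot True Kx Ky Kz 0 qy) = 0 \<or> eps_of (zroot False Kx Ky Kz 0 qy) = 0"
    unfolding eps_of_def by auto
  then show ?thesis using eps1_nonneg[of Kx Ky Kz 0 qy] unfolding eps1_def by linarith
qed

theorem mainTheorem6:
  fixes Kx Ky Kz :: real
  assumes "Kx > 0" and "Ky > 0" and "Kz > 0"
  shows "((\<exists>q\<in>{-pi..pi} \<times> {-pi..pi}.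
              eps1 Kx Ky Kz (fst q) (snd q) = 0 \<and>
              (\<forall>q'\<in>{-pi..pi} \<times> {-pi..pi}.
                 eps1 Kx Ky Kz (fst q) (snd q) \<le> eps1 Kx Ky Kz (fst q') (snd q')))
          \<longleftrightarrow> (\<bar>Kx - Ky\<bar> \<le> Kz \<and> Kz \<le> Kx + Ky))
       \<and> ((\<bar>Kx - Ky\<bar> \<le> Kz \<and> Kz \<le> Kx + Ky) \<longrightarrow>
            (\<exists>qs::real. cos qs = (cosh (2*Kz) - cosh (2*Kx) * cosh (2*Ky)) / (sinh (2*Kx) * sinh (2*Ky)))
          \<and> (\<forall>qs::real. cos qs = (cosh (2*Kz) - cosh (2*Kx) * cosh (2*Ky)) / (sinh (2*Kx) * sinh (2*Ky))
                \<longrightarrow> eps1 Kx Ky Kz 0 qs = 0 \<and> eps1 Kx Ky Kz 0 (- qs) = 0))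
       \<and> (\<not> (\<bar>Kx - Ky\<bar> \<le> Kz \<and> Kz \<le> Kx + Ky) \<longrightarrow>
            (\<forall>qx qy. eps1 Kx Ky Kz qx qy > 0))"
proof -
  let ?T = "\<bar>Kx - Ky\<bar> \<le> Kz \<and> Kz \<le> Kx + Ky"
  define v where "v = (cosh (2*Kz) - cosh (2*Kx) * cosh (2*Ky)) / (sinh (2*Kx) * sinh (2*Ky))"
  have T_scaled: "?T \<longleftrightarrow> \<bar>2*Kx - 2*Ky\<bar> \<le> 2*Kz \<and> 2*Kz \<le> 2*Kx + 2*Ky" by auto
  have "sinh (2*Kx) * sinh (2*Ky) \<noteq> 0" using assms by simp
  then have zero: "eps1 Kx Ky Kz 0 qs = 0" if "cos qs = v" for qs
    using that eps1_eq_0 cosh_law_eq_iff_cos unfolding v_def by blast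
  have pos: "eps1 Kx Ky Kz qx qy > 0" if "\<not> ?T" for qx qy
  proof (rule eps1_pos)
    show "cosh_law (2*Kx) (2*Ky) qy \<noteq> cosh (2*Kz)"
      using that assms T_scaled cosh_law_eq_cosh_imp_triangle[of "2*Kx" "2*Ky" "2*Kz" qy] by auto
  qed (use assms in auto)
  have solution: "\<exists>q\<in>{0..pi}. cos q = v" if ?T
    using that assms T_scaled triangle_imp_cosh_law_solvable[of "2*Kx" "2*Ky" "2*Kz"]
    unfolding v_def by auto
  have "(\<exists>q\<in>{-pi..pi} \<times> {-pi..pi}. eps1 Kx Ky Kz (fst q) (snd q) = 0 \<and>
          (\<forall>q'\<in>{-pi..pi} \<times> {-pi..pi}. eps1 Kx Ky Kz (fst q) (snd q) \<le> eps1 Kx Ky Kz (fst q') (snd q')))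
        \<longleftrightarrow> ?T"
  proof
    assume ?T
    then obtain q where "q \<in> {0..pi}" "cos q = v" using solution by blast
    then show "\<exists>q\<in>{-pi..pi} \<times> {-pi..pi}. eps1 Kx Ky Kz (fst q) (snd q) = 0 \<and>
          (\<forall>q'\<in>{-pi..pi} \<times> {-pi..pi}. eps1 Kx Ky Kz (fst q) (snd q) \<le> eps1 Kx Ky Kz (fst q') (snd q'))"
      using zero eps1_nonneg by (intro bexI[of _ "(0, q)"]) auto
  qed (use pos in \<open>metis less_irrefl\<close>)
  then show ?thesis using zero pos solution unfolding v_def by auto
qed

end
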